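(* For all real numbers $a,b,c>0$, \[ 2(a+b+c)^{3/2} \leq \left(\sqrt{a+b} + \sqrt{b+c} + \sqrt{c+a}\right) \sqrt{a^2+b^2+c^2+ab+bc+ca}. \] *)

theory Defs
  imports Complex_Main
begin

end

theory Submission
  imports Defs
begin

text \<open>With \<open>x = \<surd>(a+b)\<close>, \<open>y = \<surd>(b+c)\<close>, \<open>z = \<surd>(c+a)\<close> we have \<open>x\<^sup>2+y\<^sup>2+z\<^sup>2 = 2(a+b+c)\<close>
  and \<open>x\<^sup>4+y\<^sup>4+z\<^sup>4 = 2(a\<^sup>2+b\<^sup>2+c\<^sup>2+ab+bc+ca)\<close>, so after squaring the claim becomes
  \<open>(x\<^sup>2+y\<^sup>2+z\<^sup>2)\<^sup>3 \<le> (x+y+z)\<^sup>2 (x\<^sup>4+y\<^sup>4+z\<^sup>4)\<close>. This is the product of the two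
  Cauchy--Schwarz-type inequalities \<open>(\<Sum>x\<^sup>2)\<^sup>2 \<le> (\<Sum>x)(\<Sum>x\<^sup>3)\<close> and
  \<open>(\<Sum>x\<^sup>3)\<^sup>2 \<le> (\<Sum>x\<^sup>2)(\<Sum>x\<^sup>4)\<close>, each of which is a sum of squares.\<close>

lemma sum_squares_sq_le_sum_mult_sum_cubes:
  fixes x y z :: real
  assumes "x \<ge> 0" "y \<ge> 0" "z \<ge> 0"
  shows "(x^2 + y^2 + z^2)^2 \<le> (x + y + z) * (x^3 + y^3 + z^3)"
proof -
  have "(x + y + z) * (x^3 + y^3 + z^3) - (x^2 + y^2 + z^2)^2
      = x*y*(x - y)^2 + y*z*(y - z)^2 + z*x*(z - x)^2"
    by algebra
  moreover have "x*y*(x - y)^2 + y*z*(y - z)^2 + z*x*(z - x)^2 \<ge> 0"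
    using assms by (intro add_nonneg_nonneg mult_nonneg_nonneg) auto
  ultimately show ?thesis by linarith
qed

lemma sum_cubes_sq_le_sum_squares_mult_sum_pow4:
  fixes x y z :: real
  shows "(x^3 + y^3 + z^3)^2 \<le> (x^2 + y^2 + z^2) * (x^4 + y^4 + z^4)"
proof -
  have "(x^2 + y^2 + z^2) * (x^4 + y^4 + z^4) - (x^3 + y^3 + z^3)^2
      = (x*y)^2*(x - y)^2 + (y*z)^2*(y - z)^2 + (z*x)^2*(z - x)^2"
    by algebra
  moreover have "(x*y)^2*(x - y)^2 + (y*z)^2*(y - z)^2 + (z*x)^2*(z - x)^2 \<ge> 0"
    by (intro add_nonneg_nonneg mult_nonneg_nonneg) auto
  ultimately show ?thesis by linarith
qed

lemma sum_squares_cube_le: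
  fixes x y z :: real
  assumes "x \<ge> 0" "y \<ge> 0" "z \<ge> 0"
  shows "(x^2 + y^2 + z^2)^3 \<le> (x + y + z)^2 * (x^4 + y^4 + z^4)"
proof -
  let ?P = "x^2 + y^2 + z^2"
  have "?P * ?P^3 = (?P^2)^2"
    by (simp add: power_numeral_reduce)
  also have "\<dots> \<le> ((x + y + z) * (x^3 + y^3 + z^3))^2"
    using sum_squares_sq_le_sum_mult_sum_cubes[OF assms] by (intro power_mono) auto
  also have "\<dots> = (x + y + z)^2 * (x^3 + y^3 + z^3)^2"
    by (simp add: power_mult_distrib)
  also have "\<dots> \<le> (x + y + z)^2 * (?P * (x^4 + y^4 + z^4))"
    using sum_cubes_sq_le_sum_squares_mult_sum_pow4 by (intro mult_left_mono) auto
  finally have "?P * ?P^3 \<le> ?P * ((x + y + z)^2 * (x^4 + y^4 + z^4))"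
    by (simp add: algebra_simps)
  moreover have "?P \<ge> 0"
    by simp
  ultimately show ?thesis
    by (cases "?P = 0") (auto simp: mult_le_cancel_left)
qed

lemma powr_three_halves:
  fixes s :: real
  assumes "s \<ge> 0"
  shows "s powr (3/2) = s * sqrt s"
proof -
  have "s powr (3/2) = \<bar>s\<bar> * s powr (1/2)"
    using powr_mult_base'[of s "1/2"] by simp
  then show ?thesis
    using assms by (simp add: powr_half_sqrt)
qed

theorem mainTheorem6:
  fixes a b c :: real
  assumes "a > 0" and "b > 0" and "c > 0"
  shows "2 * (a + b + c) powr (3/2) \<le>
    (sqrt (a + b) + sqrt (b + c) + sqrt (c + a)) * sqrt (a^2 + b^2 + c^2 + a*b + b*c + c*a)"
proof -
  define s where "s = a + b + c"
  define Q where "Q = a^2 + b^2 + c^2 + a*b + b*c + c*a"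
  define t where "t = sqrt (a + b) + sqrt (b + c) + sqrt (c + a)"
  have "Q \<ge> 0" "s \<ge> 0" "t \<ge> 0"
    using assms unfolding Q_def s_def t_def by simp_all
  have "(2 * s)^3 \<le> t^2 * (2 * Q)"
    using sum_squares_cube_le[of "sqrt (a + b)" "sqrt (b + c)" "sqrt (c + a)"] assms
    by (simp add: s_def t_def Q_def power4_eq_xxxx power2_eq_square algebra_simps)
  moreover have "(2 * s * sqrt s)^2 = (2 * s)^3 / 2" "(t * sqrt Q)^2 = t^2 * (2 * Q) / 2"
    using \<open>Q \<ge> 0\<close> \<open>s \<ge> 0\<close> by (simp_all add: power_mult_distrib power3_eq_cube power2_eq_square)
  ultimately have "(2 * s * sqrt s)^2 \<le> (t * sqrt Q)^2"
    by (simp only:)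
  then have "2 * s * sqrt s \<le> t * sqrt Q"
    by (rule power2_le_imp_le) (simp add: \<open>Q \<ge> 0\<close> \<open>t \<ge> 0\<close>)
  then have "2 * s powr (3/2) \<le> t * sqrt Q"
    by (simp add: powr_three_halves[OF \<open>s \<ge> 0\<close>] mult.assoc)
  then show ?thesis
    unfolding s_def t_def Q_def .
qed

end
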